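(* Let $\mathcal{G}$ be a hereditary graph class such that $\omega_{\mathcal{G}}:=\max_{H\in\mathcal{G}} mw(H)$ exists. Then for any graph $G$, $mw(G)\le\max(\mathcal{G}\text{-}mc(G),\ \omega_{\mathcal{G}})$.
   Context: A graph class is a set of graphs containing at least one non-empty graph; it is hereditary if it is closed under taking induced subgraphs. A module of $G$ is a vertex set $M$ such that every vertex outside $M$ is adjacent to all or none of $M$. A $\mathcal{G}$-modular partition of $G$ is a partition of $V(G)$ into modules $M$ with $G[M]\in\mathcal{G}$, and $\mathcal{G}\text{-}mc(G)$ is the minimum size of such a partition. The modular-width $mw(G)$ is the maximum number of children of a prime node in the modular decomposition tree of $G$ (the inclusion tree of strong modules, where a node for module $M$ is prime if both $G[M]$ and its complement are connected), and $0$ if there is no prime node. *)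

theory Defs
  imports Main "HOL-Library.Disjoint_Sets"
begin

type_synonym 'a graph = "'a set \<times> ('a \<Rightarrow> 'a \<Rightarrow> bool)"

definition verts :: "'a graph \<Rightarrow> 'a set" where "verts G = fst G"
definition adj :: "'a graph \<Rightarrow> 'a \<Rightarrow> 'a \<Rightarrow> bool" where "adj G = snd G"

definition wf_graph :: "'a graph \<Rightarrow> bool" where
  "wf_graph G \<longleftrightarrow> finite (verts G) \<and>
     (\<forall>u v. adj G u v \<longrightarrow> u \<in> verts G \<and> v \<in> verts G \<and> u \<noteq> v) \<and>
     (\<forall>u v. adj G u v \<longrightarrow> adj G v u)"

definition induced :: "'a graph \<Rightarrow> 'a set \<Rightarrow> 'a graph" where
  "induced G S = (S, \<lambda>u v. u \<in> S \<and> v \<in> S \<and> adj G u v)"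

definition complement :: "'a graph \<Rightarrow> 'a graph" where
  "complement G = (verts G, \<lambda>u v. u \<in> verts G \<and> v \<in> verts G \<and> u \<noteq> v \<and> \<not> adj G u v)"

definition connected_graph :: "'a graph \<Rightarrow> bool" where
  "connected_graph G \<longleftrightarrow> verts G \<noteq> {} \<and>
     (\<forall>x\<in>verts G. \<forall>y\<in>verts G. (adj G)\<^sup>*\<^sup>* x y)"

definition graph_iso :: "'a graph \<Rightarrow> 'a graph \<Rightarrow> bool" where
  "graph_iso G H \<longleftrightarrow> (\<exists>f. bij_betw f (verts G) (verts H) \<and>
     (\<forall>u\<in>verts G. \<forall>v\<in>verts G. adj G u v \<longleftrightarrow> adj H (f u) (f v)))"

definition graph_class :: "'a graph set \<Rightarrow> bool" where
  "graph_class C \<longleftrightarrow> (\<forall>H\<in>C. wf_graph H) \<and> (\<exists>H\<in>C. verts H \<noteq> {}) \<and>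
     (\<forall>H\<in>C. \<forall>H'. wf_graph H' \<and> graph_iso H H' \<longrightarrow> H' \<in> C)"

definition hereditary :: "'a graph set \<Rightarrow> bool" where
  "hereditary C \<longleftrightarrow> graph_class C \<and> (\<forall>H\<in>C. \<forall>S. S \<subseteq> verts H \<longrightarrow> induced H S \<in> C)"

definition module :: "'a graph \<Rightarrow> 'a set \<Rightarrow> bool" where
  "module G M \<longleftrightarrow> M \<subseteq> verts G \<and>
     (\<forall>x\<in>verts G - M. (\<forall>y\<in>M. adj G x y) \<or> (\<forall>y\<in>M. \<not> adj G x y))"

definition strong_module :: "'a graph \<Rightarrow> 'a set \<Rightarrow> bool" where
  "strong_module G M \<longleftrightarrow> module G M \<and> M \<noteq> {} \<and>
     (\<forall>N. module G N \<longrightarrow> N \<inter> M = {} \<or> N \<subseteq> M \<or> M \<subseteq> N)"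

text \<open>Children of a node in the modular decomposition tree (the inclusion
tree of strong modules).\<close>
definition md_children :: "'a graph \<Rightarrow> 'a set \<Rightarrow> 'a set set" where
  "md_children G M = {N. strong_module G N \<and> N \<subset> M \<and>
      \<not> (\<exists>N'. strong_module G N' \<and> N \<subset> N' \<and> N' \<subset> M)}"

definition prime_node :: "'a graph \<Rightarrow> 'a set \<Rightarrow> bool" where
  "prime_node G M \<longleftrightarrow> strong_module G M \<and>
     connected_graph (induced G M) \<and> connected_graph (complement (induced G M))"

definition mw :: "'a graph \<Rightarrow> nat" where
  "mw G = Max ({card (md_children G M) | M. prime_node G M} \<union> {0})"

definition modular_partition :: "'a graph set \<Rightarrow> 'a graph \<Rightarrow> 'a set set \<Rightarrow> bool" where
  "modular_partition C G P \<longleftrightarrow> partition_on (verts G) P \<and>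
     (\<forall>M\<in>P. module G M \<and> induced G M \<in> C)"

definition mc :: "'a graph set \<Rightarrow> 'a graph \<Rightarrow> nat" where
  "mc C G = (LEAST n. \<exists>P. modular_partition C G P \<and> card P = n)"

end

theory Submission imports Defs begin

text \<open>Let \<open>M\<close> be a prime node with \<open>mw G\<close> children and \<open>P\<close> a minimum \<open>\<G>\<close>-modular
partition. If \<open>M\<close> lies inside a part, then \<open>G[M] \<in> \<G>\<close> by heredity, and \<open>M\<close> is a
prime node of \<open>G[M]\<close> with the same children, so \<open>mw G \<le> mw G[M] \<le> \<omega>\<close>. Otherwise
every part meeting the strong module \<open>M\<close> lies properly inside \<open>M\<close>. A maximal proper
submodule of a prime node is strong, because two overlapping modules covering \<open>M\<close>
would disconnect \<open>G[M]\<close> or its complement; hence every proper submodule of \<open>M\<close>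
lies in a child of \<open>M\<close>. So each child contains a part, distinct children contain
distinct parts, and \<open>mw G \<le> |P|\<close>.\<close>

lemma verts_induced [simp]: "verts (induced G S) = S"
  by (simp add: induced_def verts_def)

lemma adj_induced [simp]: "adj (induced G S) u v \<longleftrightarrow> u \<in> S \<and> v \<in> S \<and> adj G u v"
  by (simp add: induced_def adj_def)

lemma induced_induced: "M \<subseteq> X \<Longrightarrow> induced (induced G X) M = induced G M"
  by (auto simp: induced_def adj_def fun_eq_iff)

lemma verts_complement [simp]: "verts (complement G) = verts G"
  by (simp add: complement_def verts_def)

lemma adj_complement [simp]:
  "adj (complement G) u v \<longleftrightarrow> u \<in> verts G \<and> v \<in> verts G \<and> u \<noteq> v \<and> \<not> adj G u v"
  by (simp add: complement_def adj_def verts_def)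

lemma wf_graph_induced: "wf_graph G \<Longrightarrow> S \<subseteq> verts G \<Longrightarrow> wf_graph (induced G S)"
  unfolding wf_graph_def by (auto intro: finite_subset)

lemma connected_graph_adj_closed:
  assumes "connected_graph H" and "a \<in> A" and "A \<subseteq> verts H" and "b \<in> verts H"
    and "\<And>u w. u \<in> A \<Longrightarrow> adj H u w \<Longrightarrow> w \<in> A"
  shows "b \<in> A"
proof -
  have "(adj H)\<^sup>*\<^sup>* a b"
    using assms(1-4) unfolding connected_graph_def by blast
  then show ?thesis
    by (induction rule: rtranclp_induct) (use assms(2,5) in auto)
qed

lemma module_subset: "module G M \<Longrightarrow> M \<subseteq> verts G"
  unfolding module_def by blast

lemma module_adj_uniform:
  "module G M \<Longrightarrow> x \<in> verts G - M \<Longrightarrow> y \<in> M \<Longrightarrow> y' \<in> M \<Longrightarrow> adj G x y \<longleftrightarrow> adj G x y'"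
  unfolding module_def by blast

lemma module_singleton: "v \<in> verts G \<Longrightarrow> module G {v}"
  unfolding module_def by blast

lemma module_Int: "module G A \<Longrightarrow> module G B \<Longrightarrow> module G (A \<inter> B)"
  unfolding module_def by blast

lemma module_Un: "module G A \<Longrightarrow> module G B \<Longrightarrow> A \<inter> B \<noteq> {} \<Longrightarrow> module G (A \<union> B)"
  unfolding module_def by blast

lemma module_induced: "module G N \<Longrightarrow> N \<subseteq> M \<Longrightarrow> M \<subseteq> verts G \<Longrightarrow> module (induced G M) N"
  unfolding module_def by auto

lemma module_of_module_induced: "module (induced G M) N \<Longrightarrow> module G M \<Longrightarrow> module G N"
  unfolding module_def by (simp, blast)

lemma strong_moduleD:
  "strong_module G M \<Longrightarrow> module G M"
  "strong_module G M \<Longrightarrow> M \<noteq> {}"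
  "strong_module G M \<Longrightarrow> module G N \<Longrightarrow> N \<inter> M = {} \<or> N \<subseteq> M \<or> M \<subseteq> N"
  unfolding strong_module_def by blast+

lemma strong_module_induced_iff:
  assumes M: "strong_module G M" and "N \<subseteq> M"
  shows "strong_module (induced G M) N \<longleftrightarrow> strong_module G N"
proof -
  have mM: "module G M" and VM: "M \<subseteq> verts G"
    using strong_moduleD(1)[OF M] module_subset by blast+
  have modules_in_M: "module (induced G M) N' \<longleftrightarrow> module G N'" if "N' \<subseteq> M" for N'
    using module_induced[OF _ that VM] module_of_module_induced[OF _ mM] by blast
  show ?thesis
  proof
    assume sN: "strong_module (induced G M) N"
    show "strong_module G N"
      unfolding strong_module_def
    proof (intro conjI allI impI)
      show "module G N" "N \<noteq> {}"
        using sN \<open>N \<subseteq> M\<close> modules_in_M unfolding strong_module_def by blast+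
      fix N' assume mN': "module G N'"
      show "N' \<inter> N = {} \<or> N' \<subseteq> N \<or> N \<subseteq> N'"
      proof (cases "N' \<inter> N = {}")
        case False
        then have "N' \<subseteq> M \<or> M \<subseteq> N'"
          using strong_moduleD(3)[OF M mN'] \<open>N \<subseteq> M\<close> by blast
        moreover have "module (induced G M) (N' \<inter> M)"
          using modules_in_M module_Int[OF mN' mM] by blast
        then have "N' \<inter> M \<inter> N = {} \<or> N' \<inter> M \<subseteq> N \<or> N \<subseteq> N' \<inter> M"
          using strong_moduleD(3)[OF sN] by blast
        ultimately show ?thesis
          using False \<open>N \<subseteq> M\<close> by blast
      qed simp
    qed
  next
    assume "strong_module G N"
    then show "strong_module (induced G M) N"
      using \<open>N \<subseteq> M\<close> modules_in_M module_subset unfolding strong_module_def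
      by (metis verts_induced)
  qed
qed

lemma md_children_induced:
  "strong_module G M \<Longrightarrow> md_children (induced G M) M = md_children G M"
  unfolding md_children_def using strong_module_induced_iff
  by (metis (no_types, lifting) order.strict_implies_order order.strict_trans)

lemma prime_node_induced: "prime_node G M \<Longrightarrow> prime_node (induced G M) M"
  unfolding prime_node_def using strong_module_induced_iff[of G M M] induced_induced[of M M G]
  by auto

lemma md_children_disjoint:
  assumes "c \<in> md_children G M" and "c' \<in> md_children G M" and "c \<inter> c' \<noteq> {}"
  shows "c = c'"
proof -
  have "strong_module G c" "strong_module G c'"
    using assms(1,2) unfolding md_children_def by blast+
  then have "c \<subseteq> c' \<or> c' \<subseteq> c"
    using strong_moduleD assms(3) by blast
  then show ?thesis
    using assms(1,2) unfolding md_children_def by blast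
qed

lemma prime_node_not_Un_overlapping_modules:
  assumes wf: "wf_graph G" and M: "prime_node G M"
    and mY: "module G Y" and mZ: "module G Z"
    and a: "a \<in> Y - Z" and b: "b \<in> Z - Y" and i: "i \<in> Y \<inter> Z"
  shows "Y \<union> Z \<noteq> M"
proof
  assume YZ: "Y \<union> Z = M"
  have V: "M \<subseteq> verts G"
    using module_subset mY mZ YZ by blast
  have sym: "adj G u v \<longleftrightarrow> adj G v u" for u v
    using wf unfolding wf_graph_def by blast
  have uniform: "adj G u w \<longleftrightarrow> adj G a i" if u: "u \<in> Y - Z" and w: "w \<in> Z" for u w
  proof -
    have "adj G u w \<longleftrightarrow> adj G b u"
      using module_adj_uniform[OF mZ, of u w b] u w b V YZ sym by blast
    also have "\<dots> \<longleftrightarrow> adj G a b"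
      using module_adj_uniform[OF mY, of b u a] u a b V YZ sym by blast
    also have "\<dots> \<longleftrightarrow> adj G a i"
      using module_adj_uniform[OF mZ, of a b i] a b i V YZ by blast
    finally show ?thesis .
  qed
  have "b \<in> Y - Z"
  proof (cases "adj G a i")
    case False
    show ?thesis
      by (rule connected_graph_adj_closed[of "induced G M" a])
        (use M[unfolded prime_node_def] a b YZ uniform False in auto)
  next
    case True
    show ?thesis
      by (rule connected_graph_adj_closed[of "complement (induced G M)" a])
        (use M[unfolded prime_node_def] a b YZ uniform True in auto)
  qed
  then show False
    using b by blast
qed

lemma module_subset_md_child:
  assumes wf: "wf_graph G" and M: "prime_node G M"
    and mX: "module G X" and "X \<noteq> {}" and "X \<subset> M"
  shows "\<exists>c\<in>md_children G M. X \<subseteq> c"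
proof -
  have sM: "strong_module G M"
    using M unfolding prime_node_def by blast
  define S where "S = {Y. module G Y \<and> Y \<subset> M}"
  have "S \<subseteq> Pow (verts G)"
    using module_subset unfolding S_def by blast
  then have "finite S"
    using wf unfolding wf_graph_def by (meson finite_Pow_iff finite_subset)
  moreover have "X \<in> S"
    using mX \<open>X \<subset> M\<close> unfolding S_def by blast
  ultimately obtain Y where "Y \<in> S" and XY: "X \<subseteq> Y" and Ymax: "\<And>Y'. Y' \<in> S \<Longrightarrow> Y \<subseteq> Y' \<Longrightarrow> Y = Y'"
    using finite_has_maximal2 by metis
  then have mY: "module G Y" and YM: "Y \<subset> M"
    unfolding S_def by blast+
  have "strong_module G Y"
    unfolding strong_module_def
  proof (intro conjI allI impI)
    show "module G Y" "Y \<noteq> {}"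
      using mY XY \<open>X \<noteq> {}\<close> by blast+
    fix Z assume mZ: "module G Z"
    show "Z \<inter> Y = {} \<or> Z \<subseteq> Y \<or> Y \<subseteq> Z"
    proof (rule ccontr)
      assume overlap: "\<not> ?thesis"
      then have "Z \<subseteq> M"
        using strong_moduleD(3)[OF sM mZ] YM by blast
      moreover have "module G (Y \<union> Z)"
        using module_Un[OF mY mZ] overlap by blast
      ultimately have "Y \<union> Z = M"
        using Ymax[of "Y \<union> Z"] YM overlap unfolding S_def by blast
      then show False
        using prime_node_not_Un_overlapping_modules[OF wf M mY mZ] overlap by blast
    qed
  qed
  then have "Y \<in> md_children G M"
    unfolding md_children_def using Ymax YM strong_moduleD(1) unfolding S_def by blast
  then show ?thesis
    using XY by blast
qed

lemma finite_prime_node_widths: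
  "finite (verts G) \<Longrightarrow> finite {card (md_children G M) | M. prime_node G M}"
proof -
  assume "finite (verts G)"
  moreover have "{card (md_children G M) | M. prime_node G M}
      \<subseteq> (\<lambda>M. card (md_children G M)) ` Pow (verts G)"
    unfolding prime_node_def strong_module_def module_def by auto
  ultimately show ?thesis
    using finite_subset by blast
qed

lemma card_md_children_le_mw:
  "finite (verts G) \<Longrightarrow> prime_node G M \<Longrightarrow> card (md_children G M) \<le> mw G"
  unfolding mw_def using finite_prime_node_widths[of G] by (intro Max_ge) auto

lemma mw_attained:
  assumes "finite (verts G)" and "mw G \<noteq> 0"
  obtains M where "prime_node G M" and "mw G = card (md_children G M)"
proof -
  have "mw G \<in> {card (md_children G M) | M. prime_node G M} \<union> {0}"
    unfolding mw_def using finite_prime_node_widths[OF assms(1)] by (intro Max_in) auto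
  then show ?thesis
    using that assms(2) by auto
qed

lemma card_md_children_le_mw_induced:
  assumes "wf_graph G" and M: "prime_node G M"
  shows "card (md_children G M) \<le> mw (induced G M)"
proof -
  have "strong_module G M"
    using M unfolding prime_node_def by blast
  moreover have "finite M"
    using assms module_subset unfolding prime_node_def strong_module_def wf_graph_def
    by (meson finite_subset)
  ultimately show ?thesis
    using card_md_children_le_mw[OF _ prime_node_induced[OF M]] md_children_induced[of G M]
    by simp
qed

lemma card_md_children_le_card_partition:
  assumes wf: "wf_graph G" and M: "prime_node G M"
    and P: "partition_on (verts G) P" and modules: "\<forall>X\<in>P. module G X"
    and not_in_part: "\<not> (\<exists>X\<in>P. M \<subseteq> X)"
  shows "card (md_children G M) \<le> card P"
proof -
  have sM: "strong_module G M"
    using M unfolding prime_node_def by blast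
  have "\<exists>X\<in>P. X \<subseteq> c" if c: "c \<in> md_children G M" for c
  proof -
    have cM: "c \<subset> M" and "c \<noteq> {}"
      using c strong_moduleD(2) unfolding md_children_def by blast+
    then obtain v where v: "v \<in> c"
      by blast
    moreover have "c \<subseteq> verts G"
      using cM module_subset strong_moduleD(1)[OF sM] by blast
    ultimately obtain X where X: "X \<in> P" "v \<in> X"
      using partition_onD1[OF P] by blast
    have "X \<inter> M = {} \<or> X \<subseteq> M \<or> M \<subseteq> X"
      using strong_moduleD(3)[OF sM] modules X(1) by blast
    then have "X \<subset> M"
      using not_in_part X v cM by blast
    then obtain c' where c': "c' \<in> md_children G M" and "X \<subseteq> c'"
      using module_subset_md_child[OF wf M] modules X by blast
    then have "c' = c"
      using md_children_disjoint[OF c' c] v X(2) by blast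
    then show ?thesis
      using X(1) \<open>X \<subseteq> c'\<close> by blast
  qed
  then obtain part where part: "\<forall>c\<in>md_children G M. part c \<in> P \<and> part c \<subseteq> c"
    using bchoice[of "md_children G M" "\<lambda>c X. X \<in> P \<and> X \<subseteq> c"] by blast
  have "inj_on part (md_children G M)"
  proof (rule inj_onI)
    fix c c' assume c: "c \<in> md_children G M" and c': "c' \<in> md_children G M"
      and same: "part c = part c'"
    have "part c \<noteq> {}"
      using part c partition_onD3[OF P] by fastforce
    then have "c \<inter> c' \<noteq> {}"
      using part c c' same by blast
    then show "c = c'"
      using md_children_disjoint[OF c c'] by blast
  qed
  moreover have "finite P"
    using wf P finite_elements unfolding wf_graph_def by blast
  ultimately show ?thesis
    using part by (intro card_inj_on_le) auto
qed

lemma hereditary_induced: "hereditary C \<Longrightarrow> H \<in> C \<Longrightarrow> S \<subseteq> verts H \<Longrightarrow> induced H S \<in> C"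
  unfolding hereditary_def by blast

lemma hereditary_induced_singleton:
  assumes C: "hereditary C" and wf: "wf_graph G" and v: "v \<in> verts G"
  shows "induced G {v} \<in> C"
proof -
  have "graph_class C"
    using C unfolding hereditary_def by blast
  then obtain H w where H: "H \<in> C" and w: "w \<in> verts H" and wfH: "wf_graph H"
    and iso_closed: "\<And>H H'. H \<in> C \<Longrightarrow> wf_graph H' \<Longrightarrow> graph_iso H H' \<Longrightarrow> H' \<in> C"
    unfolding graph_class_def by blast
  have "graph_iso (induced H {w}) (induced G {v})"
    unfolding graph_iso_def using wf wfH unfolding wf_graph_def
    by (intro exI[of _ "\<lambda>_. v"]) (auto simp: bij_betw_def)
  moreover have "induced H {w} \<in> C"
    using hereditary_induced[OF C H] w by simp
  moreover have "wf_graph (induced G {v})"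
    using wf_graph_induced[OF wf] v by simp
  ultimately show ?thesis
    using iso_closed by blast
qed

lemma mc_attained:
  assumes "hereditary C" and "wf_graph G"
  obtains P where "modular_partition C G P" and "card P = mc C G"
proof -
  have "modular_partition C G ((\<lambda>v. {v}) ` verts G)"
    unfolding modular_partition_def
    using partition_on_singletons module_singleton hereditary_induced_singleton[OF assms]
    by fastforce
  then have "\<exists>n P. modular_partition C G P \<and> card P = n"
    by blast
  then have "\<exists>P. modular_partition C G P \<and> card P = mc C G"
    unfolding mc_def by (rule LeastI_ex)
  then show ?thesis
    using that by blast
qed

theorem theorem5:
  fixes C :: "'a graph set" and G :: "'a graph" and \<omega> :: nat
  assumes "hereditary C"
    and "\<omega> \<in> mw ` C" and "\<forall>H\<in>C. mw H \<le> \<omega>"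
    and "wf_graph G"
  shows "mw G \<le> max (mc C G) \<omega>"
proof (cases "mw G = 0")
  case False
  obtain P where P: "modular_partition C G P" and "card P = mc C G"
    using mc_attained[OF assms(1,4)] .
  obtain M where M: "prime_node G M" and mwM: "mw G = card (md_children G M)"
    using mw_attained False assms(4) unfolding wf_graph_def by blast
  show ?thesis
  proof (cases "\<exists>X\<in>P. M \<subseteq> X")
    case True
    then obtain X where "X \<in> P" and "M \<subseteq> X"
      by blast
    then have "induced G M \<in> C"
      using P hereditary_induced[OF assms(1)] induced_induced
      unfolding modular_partition_def by (metis verts_induced)
    then show ?thesis
      using card_md_children_le_mw_induced[OF assms(4) M] mwM assms(3) by fastforce
  next
    case False
    moreover have "partition_on (verts G) P" and "\<forall>X\<in>P. module G X"
      using P unfolding modular_partition_def by blast+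
    ultimately have "mw G \<le> card P"
      using card_md_children_le_card_partition[OF assms(4) M] mwM by simp
    then show ?thesis
      using \<open>card P = mc C G\<close> by simp
  qed
qed simp

end
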